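(* Let $D$ be a discrete space, $M$ a Tychonoff space and $\pi:D\to M$ a map such that $M$ is countably compact at the set $\pi(D)$. Regard $\pi$ also as a map $D\to\beta M$, where $\beta M$ is the Stone–Čech compactification of $M$. Then the compact space $D\cup_\pi\beta M$ (which contains $D\cup_\pi M$ as a subspace) is the Stone–Čech compactification of $D\cup_\pi M$; i.e. the Stone–Čech extension $\beta(D\cup_\pi M)\to D\cup_\pi\beta M$ of the inclusion $D\cup_\pi M\subset D\cup_\pi \beta M$ is a homeomorphism.
   Context: For a discrete space $D$: if $D$ is infinite, $\alpha D=D\cup\{\infty\}$ denotes its one-point (Aleksandrov) compactification; if $D$ is finite, $\alpha D=D\cup\{\infty\}$ is the topological sum of $D$ and a singleton $\{\infty\}$ with $\infty\notin D$. For a map $\pi:D\to M$ into a $T_1$ space $M$, $D\cup_\pi M$ is the subspace $\{(x,\pi(x)):x\in D\}\cup(\{\infty\}\times M)$ of $\alpha D\times M$. A space $X$ is countably compact at a subset $A\subset X$ if every infinite subset $B\subset A$ has an accumulation point in $X$, i.e. a point $x$ each neighborhood of which contains infinitely many points of $B$. *)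

theory Defs
  imports "HOL-Analysis.Analysis"
begin

text \<open>The space alpha D for a discrete space D (a set of type 'a, with the discrete
 topology).  The point infinity is None, a point x of D is Some x.  For infinite D this
 is the one-point compactification; for finite D every subset is open, i.e. it is the
 topological sum of D and the singleton.\<close>
definition alpha_top :: "'a set \<Rightarrow> 'a option topology" where
  "alpha_top D = topology (\<lambda>U. U \<subseteq> insert None (Some ` D) \<and>
                                (None \<in> U \<longrightarrow> finite (Some ` D - U)))"

text \<open>The space D \<union>_\<pi> M as a subspace of alpha D \<times> M.\<close>
definition glue_top :: "'a set \<Rightarrow> ('a \<Rightarrow> 'b) \<Rightarrow> 'b topology \<Rightarrow> ('a option \<times> 'b) topology" where
  "glue_top D \<pi> M = subtopology (prod_topology (alpha_top D) M)
      ((\<lambda>x. (Some x, \<pi> x)) ` D \<union> ({None} \<times> topspace M))"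

definition countably_compact_at :: "'a topology \<Rightarrow> 'a set \<Rightarrow> bool" where
  "countably_compact_at X A \<longleftrightarrow>
     (\<forall>B. B \<subseteq> A \<and> infinite B \<longrightarrow>
        (\<exists>x\<in>topspace X. \<forall>U. openin X U \<and> x \<in> U \<longrightarrow> infinite (U \<inter> B)))"

definition tychonoff_space :: "'a topology \<Rightarrow> bool" where
  "tychonoff_space X \<longleftrightarrow> completely_regular_space X \<and> t1_space X"

definition stone_cech_compactification ::
    "'a topology \<Rightarrow> ('a \<Rightarrow> 'b) \<Rightarrow> 'b topology \<Rightarrow> bool" where
  "stone_cech_compactification X e K \<longleftrightarrow>
     compact_space K \<and> Hausdorff_space K \<and> embedding_map X K e \<and>
     K closure_of (e ` topspace X) = topspace K \<and>
     (\<forall>f. continuous_map X euclideanreal f \<and> bounded (f ` topspace X) \<longrightarrow>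
        (\<exists>g. continuous_map K euclideanreal g \<and> (\<forall>x\<in>topspace X. g (e x) = f x)))"

end

theory Submission
  imports Defs
begin

text \<open>
  The space \<open>D \<union>\<^sub>\<pi> \<beta>M\<close> is a closed subspace of the compact Hausdorff space \<open>\<alpha>D \<times> \<beta>M\<close>,
  and the points of \<open>D\<close> are isolated in it; so density of \<open>D \<union>\<^sub>\<pi> M\<close> reduces to density
  of \<open>M\<close> in \<open>\<beta>M\<close> on the line \<open>{\<infinity>} \<times> \<beta>M\<close>.  A bounded continuous \<open>f\<close> on \<open>D \<union>\<^sub>\<pi> M\<close> is
  extended by extending its restriction to \<open>{\<infinity>} \<times> M\<close> over \<open>\<beta>M\<close> and keeping its values at
  the isolated points.  This is continuous at the points \<open>(\<infinity>, b)\<close> because for every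
  \<open>\<epsilon> > 0\<close> only finitely many \<open>x \<in> D\<close> satisfy \<open>\<bar>f (x, \<pi> x) - f (\<infinity>, \<pi> x)\<bar> \<ge> \<epsilon>\<close>:
  infinitely many such \<open>x\<close> would, by countable compactness of \<open>M\<close> at \<open>\<pi>(D)\<close>, have images
  clustering at some \<open>m \<in> M\<close>, contradicting continuity of \<open>f\<close> at \<open>(\<infinity>, m)\<close>.
\<close>

lemma openin_alpha_top:
  "openin (alpha_top D) U \<longleftrightarrow>
     U \<subseteq> insert None (Some ` D) \<and> (None \<in> U \<longrightarrow> finite (Some ` D - U))"
proof -
  have "Some ` D - S \<inter> T = (Some ` D - S) \<union> (Some ` D - T)" for S T :: "'a option set"
    by blast
  moreover have "Some ` D - \<Union> K \<subseteq> Some ` D - S" if "S \<in> K" for S and K :: "'a option set set"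
    using that by blast
  ultimately have "istopology (\<lambda>U. U \<subseteq> insert None (Some ` D) \<and> (None \<in> U \<longrightarrow> finite (Some ` D - U)))"
    unfolding istopology_def by auto (meson finite_subset)
  then show ?thesis
    unfolding alpha_top_def by simp
qed

lemma topspace_alpha_top: "topspace (alpha_top D) = insert None (Some ` D)"
proof
  show "topspace (alpha_top D) \<subseteq> insert None (Some ` D)"
    using openin_topspace[of "alpha_top D"] unfolding openin_alpha_top by blast
  show "insert None (Some ` D) \<subseteq> topspace (alpha_top D)"
    by (rule openin_subset) (simp add: openin_alpha_top)
qed

lemma openin_alpha_top_Some: "x \<in> D \<Longrightarrow> openin (alpha_top D) {Some x}"
  by (simp add: openin_alpha_top)

lemma openin_alpha_top_cofinite:
  "finite F \<Longrightarrow> openin (alpha_top D) (insert None (Some ` (D - F)))"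
  unfolding openin_alpha_top
  by (auto intro: finite_subset[of _ "Some ` F"])

lemma compact_space_alpha_top: "compact_space (alpha_top D)"
  unfolding compact_space_alt topspace_alpha_top
proof (intro allI impI)
  fix \<U> :: "'a option set set"
  assume \<U>: "(\<forall>U\<in>\<U>. openin (alpha_top D) U) \<and> insert None (Some ` D) \<subseteq> \<Union> \<U>"
  then obtain S where S: "S \<in> \<U>" "None \<in> S" by blast
  then have fin: "finite (Some ` D - S)" using \<U> openin_alpha_top by blast
  have "\<forall>y\<in>Some ` D - S. \<exists>U\<in>\<U>. y \<in> U" using \<U> by blast
  then obtain c where c: "\<And>y. y \<in> Some ` D - S \<Longrightarrow> c y \<in> \<U> \<and> y \<in> c y"
    by metis
  let ?\<F> = "insert S (c ` (Some ` D - S))"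
  have "finite ?\<F>" using fin by simp
  moreover have "?\<F> \<subseteq> \<U>" using S c by blast
  moreover have "insert None (Some ` D) \<subseteq> \<Union> ?\<F>" using S c by blast
  ultimately show "\<exists>\<F>. finite \<F> \<and> \<F> \<subseteq> \<U> \<and> insert None (Some ` D) \<subseteq> \<Union> \<F>"
    by blast
qed

lemma Hausdorff_space_alpha_top: "Hausdorff_space (alpha_top D)"
  unfolding Hausdorff_space_def topspace_alpha_top
proof (intro allI impI)
  fix p q :: "'a option"
  assume pq: "p \<in> insert None (Some ` D) \<and> q \<in> insert None (Some ` D) \<and> p \<noteq> q"
  have separate: "\<exists>U V. openin (alpha_top D) U \<and> openin (alpha_top D) V \<and> Some x \<in> U \<and> r \<in> V \<and> disjnt U V"
    if "x \<in> D" "r \<in> insert None (Some ` D)" "r \<noteq> Some x" for x r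
    using that openin_alpha_top_Some[of x D] openin_alpha_top_cofinite[of "{x}" D]
    by (intro exI[of _ "{Some x}"] exI[of _ "insert None (Some ` (D - {x}))"]) auto
  show "\<exists>U V. openin (alpha_top D) U \<and> openin (alpha_top D) V \<and> p \<in> U \<and> q \<in> V \<and> disjnt U V"
  proof (cases p)
    case None
    then obtain x where "q = Some x" "x \<in> D" using pq by auto
    with separate[of x p] pq show ?thesis by (metis disjnt_sym)
  next
    case (Some x)
    with separate[of x q] pq show ?thesis by auto
  qed
qed

definition glue_carrier :: "'a set \<Rightarrow> ('a \<Rightarrow> 'b) \<Rightarrow> 'b set \<Rightarrow> ('a option \<times> 'b) set" where
  "glue_carrier D \<pi> T = (\<lambda>x. (Some x, \<pi> x)) ` D \<union> ({None} \<times> T)"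

lemma glue_top_eq_subtopology:
  "glue_top D \<pi> M = subtopology (prod_topology (alpha_top D) M) (glue_carrier D \<pi> (topspace M))"
  by (simp add: glue_top_def glue_carrier_def)

lemma topspace_glue_top:
  "\<pi> ` D \<subseteq> topspace M \<Longrightarrow> topspace (glue_top D \<pi> M) = glue_carrier D \<pi> (topspace M)"
  by (auto simp: glue_top_eq_subtopology glue_carrier_def topspace_alpha_top)

lemma Hausdorff_space_glue_top: "Hausdorff_space M \<Longrightarrow> Hausdorff_space (glue_top D \<pi> M)"
  unfolding glue_top_def
  by (intro Hausdorff_space_subtopology Hausdorff_space_prod_topology[THEN iffD2])
     (simp add: Hausdorff_space_alpha_top)

lemma closedin_glue_carrier:
  assumes "t1_space M" "\<pi> ` D \<subseteq> topspace M"
  shows "closedin (prod_topology (alpha_top D) M) (glue_carrier D \<pi> (topspace M))"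
  unfolding closedin_def
proof
  let ?X = "prod_topology (alpha_top D) M" and ?S = "glue_carrier D \<pi> (topspace M)"
  show "?S \<subseteq> topspace ?X"
    using assms(2) by (auto simp: glue_carrier_def topspace_alpha_top)
  show "openin ?X (topspace ?X - ?S)"
    unfolding openin_prod_topology_alt
  proof (intro allI impI)
    fix p y assume py: "(p, y) \<in> topspace ?X - ?S"
    then obtain x where x: "p = Some x" "x \<in> D" "y \<in> topspace M" "y \<noteq> \<pi> x"
      by (auto simp: glue_carrier_def topspace_alpha_top)
    have "\<pi> x \<in> topspace M"
      using assms(2) x(2) by blast
    then have "openin M (topspace M - {\<pi> x})"
      using assms(1) by (simp add: closedin_def t1_space_closedin_singleton)
    moreover have "{Some x} \<times> (topspace M - {\<pi> x}) \<subseteq> topspace ?X - ?S"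
      using x by (auto simp: glue_carrier_def topspace_alpha_top)
    ultimately show "\<exists>U V. openin (alpha_top D) U \<and> openin M V \<and> p \<in> U \<and> y \<in> V \<and>
        U \<times> V \<subseteq> topspace ?X - ?S"
      using openin_alpha_top_Some[OF x(2)] x by blast
  qed
qed

lemma compact_space_glue_top:
  assumes "compact_space M" "t1_space M" "\<pi> ` D \<subseteq> topspace M"
  shows "compact_space (glue_top D \<pi> M)"
  unfolding glue_top_eq_subtopology
  by (intro compact_space_subtopology closedin_compact_space closedin_glue_carrier assms
        compact_space_prod_topology[THEN iffD2]) (simp add: compact_space_alpha_top assms)

lemma openin_glue_top_Some:
  assumes "x \<in> D" "\<pi> x \<in> topspace M"
  shows "openin (glue_top D \<pi> M) {(Some x, \<pi> x)}"
proof -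
  have "openin (prod_topology (alpha_top D) M) ({Some x} \<times> topspace M)"
    using openin_alpha_top_Some[OF assms(1)] by (simp add: openin_prod_Times_iff)
  moreover have "{(Some x, \<pi> x)} = ({Some x} \<times> topspace M) \<inter> glue_carrier D \<pi> (topspace M)"
    using assms by (auto simp: glue_carrier_def)
  ultimately show ?thesis
    unfolding glue_top_eq_subtopology openin_subtopology by blast
qed

lemma openin_glue_top_basic:
  assumes "finite F" "openin M V"
  shows "openin (glue_top D \<pi> M)
           ((insert None (Some ` (D - F)) \<times> V) \<inter> glue_carrier D \<pi> (topspace M))"
  using openin_alpha_top_cofinite[OF assms(1)] assms(2)
  unfolding glue_top_eq_subtopology openin_subtopology
  by (intro exI[of _ "insert None (Some ` (D - F)) \<times> V"]) (simp add: openin_prod_Times_iff)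

lemma glue_top_neighbourhood_None:
  assumes "openin (glue_top D \<pi> M) W" "(None, b) \<in> W"
  obtains F V where "finite F" "openin M V" "b \<in> V"
    "\<And>x. x \<in> D \<Longrightarrow> x \<notin> F \<Longrightarrow> \<pi> x \<in> V \<Longrightarrow> (Some x, \<pi> x) \<in> W"
    "\<And>y. y \<in> V \<Longrightarrow> (None, y) \<in> W"
proof -
  obtain T where T: "openin (prod_topology (alpha_top D) M) T"
      "W = T \<inter> glue_carrier D \<pi> (topspace M)"
    using assms(1) unfolding glue_top_eq_subtopology openin_subtopology by blast
  have "(None, b) \<in> T"
    using assms(2) T(2) by blast
  then have "\<exists>U V. openin (alpha_top D) U \<and> openin M V \<and> None \<in> U \<and> b \<in> V \<and> U \<times> V \<subseteq> T"
    using T(1) unfolding openin_prod_topology_alt by simp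
  then obtain U V where UV: "openin (alpha_top D) U" "openin M V" "None \<in> U" "b \<in> V" "U \<times> V \<subseteq> T"
    by blast
  let ?F = "{x \<in> D. Some x \<notin> U}"
  have "finite (Some ` D - U)"
    using UV(1,3) by (simp add: openin_alpha_top)
  then have "finite (Some ` ?F)"
    by (rule finite_subset[rotated]) blast
  then have "finite ?F"
    by (rule finite_imageD) simp
  have "V \<subseteq> topspace M"
    using UV(2) openin_subset by blast
  show thesis
  proof (rule that[of ?F V])
    fix x assume "x \<in> D" "x \<notin> ?F" "\<pi> x \<in> V"
    then show "(Some x, \<pi> x) \<in> W"
      using UV(5) T(2) by (auto simp: glue_carrier_def)
  next
    fix y assume "y \<in> V"
    then show "(None, y) \<in> W"
      using UV(3,5) T(2) \<open>V \<subseteq> topspace M\<close> by (auto simp: glue_carrier_def)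
  qed fact+
qed

lemma continuous_map_glue_top_None:
  "continuous_map M (glue_top D \<pi> M) (\<lambda>y. (None, y))"
  unfolding glue_top_eq_subtopology continuous_map_in_subtopology
  by (auto simp: glue_carrier_def topspace_alpha_top intro: continuous_map_pairedI)

lemma continuous_map_real_iff:
  "continuous_map X euclideanreal f \<longleftrightarrow>
    (\<forall>x\<in>topspace X. \<forall>\<epsilon>>0. \<exists>U. openin X U \<and> x \<in> U \<and> (\<forall>y\<in>U. \<bar>f y - f x\<bar> < \<epsilon>))"
  by (simp add: Met_TC.continuous_map_to_metric dist_real_def abs_minus_commute
      flip: mtopology_is_euclidean)

lemma countably_compact_at_clustering_preimage:
  assumes "countably_compact_at M (\<pi> ` D)" "\<pi> ` D \<subseteq> topspace M" "A \<subseteq> D" "infinite A"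
  obtains m where "m \<in> topspace M" "\<And>V. openin M V \<Longrightarrow> m \<in> V \<Longrightarrow> infinite {x \<in> A. \<pi> x \<in> V}"
proof (cases "finite (\<pi> ` A)")
  case True
  then obtain a where a: "a \<in> A" "infinite {x \<in> A. \<pi> x = \<pi> a}"
    using pigeonhole_infinite[OF assms(4) True] by blast
  show thesis
  proof (rule that[of "\<pi> a"])
    show "\<pi> a \<in> topspace M" using a(1) assms(2,3) by blast
    fix V assume "\<pi> a \<in> V"
    then have "{x \<in> A. \<pi> x = \<pi> a} \<subseteq> {x \<in> A. \<pi> x \<in> V}" by auto
    with a(2) show "infinite {x \<in> A. \<pi> x \<in> V}" using finite_subset by blast
  qed
next
  case False
  moreover have "\<pi> ` A \<subseteq> \<pi> ` D" using assms(3) by blast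
  ultimately have "\<exists>m\<in>topspace M. \<forall>V. openin M V \<and> m \<in> V \<longrightarrow> infinite (V \<inter> \<pi> ` A)"
    using assms(1) unfolding countably_compact_at_def by simp
  then obtain m where m: "m \<in> topspace M"
      "\<And>V. openin M V \<Longrightarrow> m \<in> V \<Longrightarrow> infinite (V \<inter> \<pi> ` A)"
    by blast
  show thesis
  proof (rule that[OF m(1)])
    fix V assume "openin M V" "m \<in> V"
    moreover have "V \<inter> \<pi> ` A \<subseteq> \<pi> ` {x \<in> A. \<pi> x \<in> V}" by blast
    ultimately show "infinite {x \<in> A. \<pi> x \<in> V}"
      using m(2) finite_surj[of "{x \<in> A. \<pi> x \<in> V}" "V \<inter> \<pi> ` A" \<pi>] by blast
  qed
qed

lemma finite_glue_top_jumps: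
  assumes "\<pi> ` D \<subseteq> topspace M" "countably_compact_at M (\<pi> ` D)"
    and f: "continuous_map (glue_top D \<pi> M) euclideanreal f" and "\<epsilon> > 0"
  shows "finite {x \<in> D. \<epsilon> \<le> \<bar>f (Some x, \<pi> x) - f (None, \<pi> x)\<bar>}" (is "finite ?A")
proof (rule ccontr)
  assume "infinite ?A"
  moreover have "?A \<subseteq> D" by blast
  ultimately obtain m where m: "m \<in> topspace M"
      and cluster: "\<And>V. openin M V \<Longrightarrow> m \<in> V \<Longrightarrow> infinite {x \<in> ?A. \<pi> x \<in> V}"
    using countably_compact_at_clustering_preimage[OF assms(2,1)] by blast
  have "(None, m) \<in> topspace (glue_top D \<pi> M)"
    using m assms(1) by (simp add: topspace_glue_top glue_carrier_def)
  then obtain W where W: "openin (glue_top D \<pi> M) W" "(None, m) \<in> W"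
      "\<And>q. q \<in> W \<Longrightarrow> \<bar>f q - f (None, m)\<bar> < \<epsilon> / 2"
    using f \<open>\<epsilon> > 0\<close> unfolding continuous_map_real_iff by (meson half_gt_zero)
  obtain F V where FV: "finite F" "openin M V" "m \<in> V"
      "\<And>x. x \<in> D \<Longrightarrow> x \<notin> F \<Longrightarrow> \<pi> x \<in> V \<Longrightarrow> (Some x, \<pi> x) \<in> W"
      "\<And>y. y \<in> V \<Longrightarrow> (None, y) \<in> W"
    using glue_top_neighbourhood_None[OF W(1,2)] by blast
  have "infinite ({x \<in> ?A. \<pi> x \<in> V} - F)"
    using cluster[OF FV(2,3)] FV(1) by simp
  then have "{x \<in> ?A. \<pi> x \<in> V} - F \<noteq> {}"
    by (metis finite.emptyI)
  then obtain x where x: "x \<in> ?A" "\<pi> x \<in> V" "x \<notin> F"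
    by blast
  then have "\<bar>f (Some x, \<pi> x) - f (None, m)\<bar> < \<epsilon> / 2" "\<bar>f (None, \<pi> x) - f (None, m)\<bar> < \<epsilon> / 2"
      "\<epsilon> \<le> \<bar>f (Some x, \<pi> x) - f (None, \<pi> x)\<bar>"
    using W(3) FV(4,5) by auto
  then show False by linarith
qed

lemma embedding_map_from_subtopology:
  assumes "embedding_map X Y f"
  shows "embedding_map (subtopology X S) Y f"
proof -
  have hm: "homeomorphic_map X (subtopology Y (f ` topspace X)) f"
    using assms unfolding embedding_map_def .
  have "f ` topspace X \<subseteq> topspace Y"
    using homeomorphic_imp_surjective_map[OF hm] unfolding topspace_subtopology by blast
  then have "f ` (topspace X \<inter> S) = topspace (subtopology Y (f ` topspace X)) \<inter> f ` (topspace X \<inter> S)"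
    unfolding topspace_subtopology by blast
  from homeomorphic_map_subtopologies[OF hm this]
  have "homeomorphic_map (subtopology X S)
          (subtopology (subtopology Y (f ` topspace X)) (f ` (topspace X \<inter> S))) f" .
  moreover have "f ` topspace X \<inter> f ` (topspace X \<inter> S) = f ` (topspace X \<inter> S)"
    by blast
  ultimately show ?thesis
    unfolding embedding_map_def subtopology_subtopology topspace_subtopology by simp
qed

lemma embedding_map_prod:
  assumes "embedding_map X X' f" "embedding_map Y Y' g"
  shows "embedding_map (prod_topology X Y) (prod_topology X' Y') (\<lambda>(x, y). (f x, g y))"
proof -
  obtain f' g' where "homeomorphic_maps X (subtopology X' (f ` topspace X)) f f'"
      "homeomorphic_maps Y (subtopology Y' (g ` topspace Y)) g g'"
    using assms unfolding embedding_map_def homeomorphic_map_maps by blast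
  then have "homeomorphic_maps (prod_topology X Y)
      (subtopology (prod_topology X' Y') (f ` topspace X \<times> g ` topspace Y))
      (\<lambda>(x, y). (f x, g y)) (\<lambda>(x, y). (f' x, g' y))"
    unfolding subtopology_Times homeomorphic_maps_prod by blast
  moreover have "(\<lambda>(x, y). (f x, g y)) ` topspace (prod_topology X Y) = f ` topspace X \<times> g ` topspace Y"
    by (simp add: image_paired_Times)
  ultimately show ?thesis
    unfolding embedding_map_def homeomorphic_map_maps by metis
qed

lemma embedding_map_glue_top:
  assumes "embedding_map M B e" "\<pi> ` D \<subseteq> topspace M" "e ` topspace M \<subseteq> topspace B"
  shows "embedding_map (glue_top D \<pi> M) (glue_top D (e \<circ> \<pi>) B) (\<lambda>(a, y). (a, e y))"
proof -
  have "embedding_map (alpha_top D) (alpha_top D) id"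
    by (simp add: embedding_map_def)
  from embedding_map_prod[OF this assms(1)]
  have "embedding_map (glue_top D \<pi> M) (prod_topology (alpha_top D) B) (\<lambda>(a, y). (id a, e y))"
    unfolding glue_top_eq_subtopology[of D \<pi> M] by (rule embedding_map_from_subtopology)
  moreover have "(\<lambda>(a, y). (id a, e y)) ` topspace (glue_top D \<pi> M) \<subseteq> glue_carrier D (e \<circ> \<pi>) (topspace B)"
    using assms(2,3) by (auto simp: topspace_glue_top glue_carrier_def)
  ultimately have "embedding_map (glue_top D \<pi> M) (glue_top D (e \<circ> \<pi>) B) (\<lambda>(a, y). (id a, e y))"
    unfolding glue_top_eq_subtopology[of D "e \<circ> \<pi>" B] embedding_map_in_subtopology by blast
  then show ?thesis
    by (simp add: id_def)
qed

lemma closure_of_glue_top: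
  assumes "\<pi> ` D \<subseteq> topspace M" "e ` topspace M \<subseteq> topspace B"
    and dense: "B closure_of (e ` topspace M) = topspace B"
  shows "glue_top D (e \<circ> \<pi>) B closure_of ((\<lambda>(a, y). (a, e y)) ` topspace (glue_top D \<pi> M))
         = topspace (glue_top D (e \<circ> \<pi>) B)"
proof -
  let ?K = "glue_top D (e \<circ> \<pi>) B" and ?E = "(\<lambda>(a, y). (a, e y)) ` topspace (glue_top D \<pi> M)"
  have tsX: "topspace (glue_top D \<pi> M) = glue_carrier D \<pi> (topspace M)"
    using assms(1) by (rule topspace_glue_top)
  have tsK: "topspace ?K = glue_carrier D (e \<circ> \<pi>) (topspace B)"
    using assms(1,2) by (intro topspace_glue_top) auto
  have "p \<in> ?K closure_of ?E" if p: "p \<in> topspace ?K" for p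
  proof (cases "fst p")
    case (Some x)
    then have "x \<in> D" "p = (Some x, e (\<pi> x))"
      using p unfolding tsK glue_carrier_def by auto
    then have "p \<in> ?E"
      unfolding tsX glue_carrier_def by (auto intro: rev_image_eqI[of "(Some x, \<pi> x)"])
    then show ?thesis
      using p closure_of_subset_Int[of ?K ?E] by blast
  next
    case None
    then obtain b where b: "p = (None, b)" "b \<in> topspace B"
      using p unfolding tsK glue_carrier_def by auto
    show ?thesis
      unfolding in_closure_of
    proof (intro conjI allI impI)
      fix T assume "p \<in> T \<and> openin ?K T"
      then have "openin ?K T" "(None, b) \<in> T"
        using b(1) by auto
      then obtain F V where V: "openin B V" "b \<in> V" "\<And>y. y \<in> V \<Longrightarrow> (None, y) \<in> T"
        by (rule glue_top_neighbourhood_None) blast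
      have "b \<in> B closure_of (e ` topspace M)"
        using dense b(2) by simp
      then have "\<exists>y. y \<in> e ` topspace M \<and> y \<in> V"
        using V(1,2) unfolding in_closure_of by blast
      then obtain m where m: "m \<in> topspace M" "e m \<in> V"
        by blast
      then have "(None, e m) \<in> ?E"
        unfolding tsX glue_carrier_def by (auto intro: rev_image_eqI[of "(None, m)"])
      then show "\<exists>y. y \<in> ?E \<and> y \<in> T"
        using V(3) m(2) by blast
    qed (rule p)
  qed
  then show ?thesis
    by (meson closure_of_subset_topspace subset_antisym subsetI)
qed

definition glue_extension ::
    "('a option \<times> 'b \<Rightarrow> real) \<Rightarrow> ('a \<Rightarrow> 'b) \<Rightarrow> ('c \<Rightarrow> real) \<Rightarrow> 'a option \<times> 'c \<Rightarrow> real" where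
  "glue_extension f \<pi> g0 p = (case fst p of None \<Rightarrow> g0 (snd p) | Some x \<Rightarrow> f (Some x, \<pi> x))"

lemma glue_extension_continuous_at_None:
  assumes \<pi>: "\<pi> ` D \<subseteq> topspace M" and cc: "countably_compact_at M (\<pi> ` D)"
    and f: "continuous_map (glue_top D \<pi> M) euclideanreal f"
    and g0: "continuous_map B euclideanreal g0" "\<And>y. y \<in> topspace M \<Longrightarrow> g0 (e y) = f (None, y)"
    and "b \<in> topspace B" "\<epsilon> > 0"
  shows "\<exists>W. openin (glue_top D (e \<circ> \<pi>) B) W \<and> (None, b) \<in> W \<and>
           (\<forall>q\<in>W. \<bar>glue_extension f \<pi> g0 q - glue_extension f \<pi> g0 (None, b)\<bar> < \<epsilon>)"
proof -
  let ?g = "glue_extension f \<pi> g0"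
  obtain V where V: "openin B V" "b \<in> V" "\<And>y. y \<in> V \<Longrightarrow> \<bar>g0 y - g0 b\<bar> < \<epsilon> / 2"
    using g0(1) assms(6,7) unfolding continuous_map_real_iff by (meson half_gt_zero)
  let ?F = "{x \<in> D. \<epsilon> / 2 \<le> \<bar>f (Some x, \<pi> x) - f (None, \<pi> x)\<bar>}"
  have "finite ?F"
    using finite_glue_top_jumps[OF \<pi> cc f, of "\<epsilon> / 2"] \<open>\<epsilon> > 0\<close> by simp
  then have "openin (glue_top D (e \<circ> \<pi>) B)
      ((insert None (Some ` (D - ?F)) \<times> V) \<inter> glue_carrier D (e \<circ> \<pi>) (topspace B))"
    (is "openin _ ?W") using V(1) by (rule openin_glue_top_basic)
  moreover have "\<bar>?g q - ?g (None, b)\<bar> < \<epsilon>" if "q \<in> ?W" for q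
  proof (cases "fst q")
    case None
    with that obtain y where "q = (None, y)" "y \<in> V"
      by (auto simp: glue_carrier_def)
    with V(3) \<open>\<epsilon> > 0\<close> show ?thesis
      by (fastforce simp: glue_extension_def)
  next
    case (Some x)
    with that have x: "q = (Some x, e (\<pi> x))" "x \<in> D" "x \<notin> ?F" "e (\<pi> x) \<in> V"
      by (auto simp: glue_carrier_def)
    have "g0 (e (\<pi> x)) = f (None, \<pi> x)"
      using g0(2) \<pi> x(2) by blast
    then have "\<bar>f (None, \<pi> x) - g0 b\<bar> < \<epsilon> / 2"
      using V(3)[OF x(4)] by simp
    moreover have "\<bar>f (Some x, \<pi> x) - f (None, \<pi> x)\<bar> < \<epsilon> / 2"
      using x(2,3) by simp
    moreover have "?g q - ?g (None, b) = f (Some x, \<pi> x) - g0 b"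
      using x(1) by (simp add: glue_extension_def)
    ultimately show ?thesis
      by linarith
  qed
  moreover have "(None, b) \<in> ?W"
    using assms(6) V(2) by (simp add: glue_carrier_def)
  ultimately show ?thesis
    by blast
qed

lemma continuous_map_glue_extension:
  assumes \<pi>: "\<pi> ` D \<subseteq> topspace M" and eM: "e ` topspace M \<subseteq> topspace B"
    and cc: "countably_compact_at M (\<pi> ` D)"
    and f: "continuous_map (glue_top D \<pi> M) euclideanreal f"
    and g0: "continuous_map B euclideanreal g0" "\<And>y. y \<in> topspace M \<Longrightarrow> g0 (e y) = f (None, y)"
  shows "continuous_map (glue_top D (e \<circ> \<pi>) B) euclideanreal (glue_extension f \<pi> g0)"
  unfolding continuous_map_real_iff
proof (intro ballI allI impI)
  let ?K = "glue_top D (e \<circ> \<pi>) B"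
  fix p and \<epsilon> :: real
  assume p: "p \<in> topspace ?K" and "\<epsilon> > 0"
  have tsK: "topspace ?K = glue_carrier D (e \<circ> \<pi>) (topspace B)"
    using \<pi> eM by (intro topspace_glue_top) auto
  show "\<exists>W. openin ?K W \<and> p \<in> W \<and>
      (\<forall>q\<in>W. \<bar>glue_extension f \<pi> g0 q - glue_extension f \<pi> g0 p\<bar> < \<epsilon>)"
  proof (cases "fst p")
    case (Some x)
    then have "x \<in> D" "p = (Some x, (e \<circ> \<pi>) x)"
      using p unfolding tsK glue_carrier_def by auto
    moreover have "(e \<circ> \<pi>) x \<in> topspace B"
      using \<open>x \<in> D\<close> \<pi> eM by auto
    ultimately have "openin ?K {p}"
      using openin_glue_top_Some by metis
    then show ?thesis
      using \<open>\<epsilon> > 0\<close> by auto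
  next
    case None
    then obtain b where "p = (None, b)" "b \<in> topspace B"
      using p unfolding tsK glue_carrier_def by auto
    then show ?thesis
      using glue_extension_continuous_at_None[OF \<pi> cc f g0 _ \<open>\<epsilon> > 0\<close>] by blast
  qed
qed

lemma glue_top_bounded_extension:
  assumes "\<pi> ` D \<subseteq> topspace M" "e ` topspace M \<subseteq> topspace B"
    and "countably_compact_at M (\<pi> ` D)"
    and ext: "\<forall>f. continuous_map M euclideanreal f \<and> bounded (f ` topspace M) \<longrightarrow>
        (\<exists>g. continuous_map B euclideanreal g \<and> (\<forall>y\<in>topspace M. g (e y) = f y))"
    and f: "continuous_map (glue_top D \<pi> M) euclideanreal f"
    and bdd: "bounded (f ` topspace (glue_top D \<pi> M))"
  shows "\<exists>g. continuous_map (glue_top D (e \<circ> \<pi>) B) euclideanreal g \<and>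
           (\<forall>p\<in>topspace (glue_top D \<pi> M). g ((\<lambda>(a, y). (a, e y)) p) = f p)"
proof -
  have "continuous_map M euclideanreal (\<lambda>y. f (None, y))"
    using continuous_map_compose[OF continuous_map_glue_top_None f] by (simp add: o_def)
  moreover have "bounded ((\<lambda>y. f (None, y)) ` topspace M)"
    using bdd assms(1) by (auto simp: topspace_glue_top glue_carrier_def intro: bounded_subset)
  ultimately obtain g0 where g0: "continuous_map B euclideanreal g0"
      "\<And>y. y \<in> topspace M \<Longrightarrow> g0 (e y) = f (None, y)"
    using ext by blast
  have "glue_extension f \<pi> g0 ((\<lambda>(a, y). (a, e y)) p) = f p" if "p \<in> topspace (glue_top D \<pi> M)" for p
    using that g0(2) assms(1) by (auto simp: topspace_glue_top glue_carrier_def glue_extension_def)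
  with continuous_map_glue_extension[OF assms(1-3) f g0] show ?thesis
    by blast
qed

theorem proposition1p5:
  fixes D :: "'a set" and M :: "'b topology" and \<pi> :: "'a \<Rightarrow> 'b"
    and B :: "'c topology" and e :: "'b \<Rightarrow> 'c"
  assumes "tychonoff_space M"
    and "\<pi> ` D \<subseteq> topspace M"
    and "countably_compact_at M (\<pi> ` D)"
    and "stone_cech_compactification M e B"
  shows "stone_cech_compactification (glue_top D \<pi> M) (\<lambda>(a, y). (a, e y))
           (glue_top D (e \<circ> \<pi>) B)"
proof -
  \<comment> \<open>Tychonoff-ness of \<open>M\<close> is only needed for \<open>\<beta>M\<close> to exist; here \<open>B\<close> is given.\<close>
  have B: "compact_space B" "Hausdorff_space B" "embedding_map M B e"
      "B closure_of (e ` topspace M) = topspace B"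
    and ext: "\<forall>f. continuous_map M euclideanreal f \<and> bounded (f ` topspace M) \<longrightarrow>
        (\<exists>g. continuous_map B euclideanreal g \<and> (\<forall>y\<in>topspace M. g (e y) = f y))"
    using assms(4) unfolding stone_cech_compactification_def by simp_all
  have eM: "e ` topspace M \<subseteq> topspace B"
    using homeomorphic_imp_surjective_map[OF B(3)[unfolded embedding_map_def]]
    unfolding topspace_subtopology by blast
  then have "(e \<circ> \<pi>) ` D \<subseteq> topspace B"
    using assms(2) by auto
  then show ?thesis
    unfolding stone_cech_compactification_def
    using B assms(2,3) eM
    by (intro conjI allI impI compact_space_glue_top Hausdorff_imp_t1_space Hausdorff_space_glue_top
        embedding_map_glue_top closure_of_glue_top glue_top_bounded_extension[OF _ _ _ ext]; blast)
qed

end
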